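(* Let $P_1,P_2,P_3$ be the vertices of an equilateral triangle in $\mathbb{C}$, and let $$F_1(z)=\tfrac{z+P_1}{2},\qquad F_2(z)=\tfrac{z+P_2}{2},\qquad F_3(z)=\tfrac{3P_3-z}{2}.$$ Put $Q_1=F_3(P_1)=\tfrac{3P_3-P_1}{2}$, $Q_2=F_3(P_2)=\tfrac{3P_3-P_2}{2}$ and $V_0=\{P_1,P_2,P_3,Q_1,Q_2\}$. Let $$k=\frac{3+\sqrt{41}}{16},\qquad R_2=1,\qquad R_1=\frac{\sqrt{41}-1}{4}.$$ Define the level-1 network $G_1$ on vertex set $V_0$ with the following six edges and resistances: $P_1P_2$ has resistance $R_1$; $P_1P_3$ and $P_2P_3$ have resistance $R_2$; $Q_1Q_2$ has resistance $kR_1$; $Q_1P_3$ and $Q_2P_3$ have resistance $kR_2$. Define the level-2 network $G_2$ on vertex set $V_1=F_1(V_0)\cup F_2(V_0)\cup F_3(V_0)\subset\mathbb{C}$ (points are identified when they coincide as points of $\mathbb{C}$) whose edges are, for each $i\in\{1,2,3\}$ and each edge $pq$ of $G_1$ with resistance $r$, an edge $F_i(p)F_i(q)$ with the same resistance $r$ (parallel edges, if any, combine by adding conductances). Then for all $p,q\in V_0$, $$R^{G_1}_{\mathrm{eff}}(p,q)=k\,R^{G_2}_{\mathrm{eff}}(p,q).$$ Equivalently, the trace (Schur complement onto $V_0$) of the conductance Laplacian of $G_2$ equals $k$ times the conductance Laplacian of $G_1$.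
   Context: A resistance network is a finite vertex set with edges carrying positive resistances $r$ (conductance $c=1/r$); its energy is $\mathscr{E}(u)=\sum_{\text{edges }pq} c_{pq}(u(p)-u(q))^2$ for $u$ a real function on the vertices. For vertices $p\neq q$ of a connected network, the effective resistance is defined by $1/R_{\mathrm{eff}}(p,q)=\inf\{\mathscr{E}(u): u(p)=1,\ u(q)=0\}$, and $R_{\mathrm{eff}}(p,p)=0$. The trace of the network onto a subset $V$ of vertices is the quadratic form $u\mapsto\inf\{\mathscr{E}(g): g|_{V}=u\}$ on functions on $V$. The fractalina is the attractor of the iterated function system $\{F_1,F_2,F_3\}$. *)

theory Defs
  imports "HOL-Analysis.Analysis"
begin

text \<open>A resistance network: a finite vertex set together with a list of edges
  (p, q, r) with resistance r > 0.  Parallel edges are allowed; their conductances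
  add up automatically in the energy.\<close>

type_synonym network = "complex set \<times> (complex \<times> complex \<times> real) list"

definition energy :: "network \<Rightarrow> (complex \<Rightarrow> real) \<Rightarrow> real" where
  "energy G u = (\<Sum>(p, q, r) \<leftarrow> snd G. (1 / r) * (u p - u q)\<^sup>2)"

definition reff :: "network \<Rightarrow> complex \<Rightarrow> complex \<Rightarrow> real" where
  "reff G p q = (if p = q then 0 else
     1 / Inf {energy G u | u. (\<forall>x. x \<notin> fst G \<longrightarrow> u x = 0) \<and> u p = 1 \<and> u q = 0})"

definition equilateral :: "complex \<Rightarrow> complex \<Rightarrow> complex \<Rightarrow> bool" where
  "equilateral P1 P2 P3 \<longleftrightarrow> P1 \<noteq> P2 \<and>
     dist P1 P2 = dist P2 P3 \<and> dist P2 P3 = dist P3 P1"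

definition kconst :: real where "kconst = (3 + sqrt 41) / 16"
definition Rtwo :: real where "Rtwo = 1"
definition Rone :: real where "Rone = (sqrt 41 - 1) / 4"

definition F1 :: "complex \<Rightarrow> complex \<Rightarrow> complex" where "F1 P1 z = (z + P1) / 2"
definition F2 :: "complex \<Rightarrow> complex \<Rightarrow> complex" where "F2 P2 z = (z + P2) / 2"
definition F3 :: "complex \<Rightarrow> complex \<Rightarrow> complex" where "F3 P3 z = (3 * P3 - z) / 2"

definition V0 :: "complex \<Rightarrow> complex \<Rightarrow> complex \<Rightarrow> complex set" where
  "V0 P1 P2 P3 = {P1, P2, P3, F3 P3 P1, F3 P3 P2}"

definition edges1 :: "complex \<Rightarrow> complex \<Rightarrow> complex \<Rightarrow> (complex \<times> complex \<times> real) list" where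
  "edges1 P1 P2 P3 =
    (let Q1 = F3 P3 P1; Q2 = F3 P3 P2 in
     [(P1, P2, Rone), (P1, P3, Rtwo), (P2, P3, Rtwo),
      (Q1, Q2, kconst * Rone), (Q1, P3, kconst * Rtwo), (Q2, P3, kconst * Rtwo)])"

definition G1 :: "complex \<Rightarrow> complex \<Rightarrow> complex \<Rightarrow> network" where
  "G1 P1 P2 P3 = (V0 P1 P2 P3, edges1 P1 P2 P3)"

definition G2 :: "complex \<Rightarrow> complex \<Rightarrow> complex \<Rightarrow> network" where
  "G2 P1 P2 P3 =
    (let Fs = [F1 P1, F2 P2, F3 P3] in
     (\<Union>F \<in> set Fs. F ` V0 P1 P2 P3,
      concat (map (\<lambda>F. map (\<lambda>(p, q, r). (F p, F q, r)) (edges1 P1 P2 P3)) Fs)))"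

end

theory Submission
  imports Defs
begin

(* Writing both energies as explicit quadratic
   forms in the vertex values, one has the completing-the-square identity

     E_G2(u) = k * E_G1(u|V0) + (nonnegative form in the deviations of u from h(u|V0))

   where h is an explicit linear "harmonic extension" of boundary data to the new vertices
   (coefficients in Q(sqrt 41)).  Hence the trace of G2 onto V0 is k * E_G1, and the effective
   resistances, being reciprocals of infima of energies, satisfy R_G1 = k * R_G2. *)

definition edges_within :: "network \<Rightarrow> bool" where
  "edges_within G \<longleftrightarrow> (\<forall>(p, q, r) \<in> set (snd G). p \<in> fst G \<and> q \<in> fst G)"

lemma energy_nonneg:
  assumes "\<forall>(p, q, r) \<in> set (snd G). 0 \<le> r"
  shows "0 \<le> energy G u"
  unfolding energy_def using assms by (intro sum_list_nonneg) auto

lemma energy_cong: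
  assumes "edges_within G" and "\<forall>x \<in> fst G. u x = v x"
  shows "energy G u = energy G v"
  unfolding energy_def using assms
  by (intro arg_cong[where f = sum_list] map_cong) (auto simp: edges_within_def)

lemma Inf_eq_scaled:
  fixes S S' :: "real set" and c :: real
  assumes c_pos: "0 < c" and S_ne: "S \<noteq> {}" and S_nonneg: "\<And>e. e \<in> S \<Longrightarrow> 0 \<le> e"
    and restrict: "\<And>e'. e' \<in> S' \<Longrightarrow> \<exists>e \<in> S. c * e \<le> e'"
    and extend: "\<And>e. e \<in> S \<Longrightarrow> c * e \<in> S'"
  shows "Inf S' = c * Inf S"
proof -
  have S_bdd: "bdd_below S" using S_nonneg unfolding bdd_below_def by blast
  have S'_bdd: "bdd_below S'"
  proof (rule bdd_belowI)
    fix e' assume "e' \<in> S'"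
    then obtain e where "e \<in> S" "c * e \<le> e'" using restrict by blast
    then show "0 \<le> e'" using S_nonneg[of e] c_pos by (meson mult_nonneg_nonneg less_imp_le order_trans)
  qed
  have "c * Inf S \<le> Inf S'"
  proof (rule cInf_greatest)
    show "S' \<noteq> {}" using S_ne extend by blast
    fix e' assume "e' \<in> S'"
    then obtain e where "e \<in> S" "c * e \<le> e'" using restrict by blast
    then show "c * Inf S \<le> e'"
      using cInf_lower[OF \<open>e \<in> S\<close> S_bdd] c_pos by (meson mult_left_mono less_imp_le order_trans)
  qed
  moreover have "Inf S' / c \<le> Inf S"
  proof (rule cInf_greatest[OF S_ne])
    fix e assume "e \<in> S"
    then have "Inf S' \<le> c * e" using extend cInf_lower S'_bdd by blast
    then show "Inf S' / c \<le> e" using c_pos by (simp add: divide_le_eq mult.commute)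
  qed
  ultimately show ?thesis using c_pos by (simp add: divide_le_eq mult.commute)
qed

(* This is the weak form
   of "the trace of G' onto the vertices of G is c times the energy of G". *)
lemma reff_eq_scaled_trace:
  fixes G G' :: network and c :: real
  assumes c_pos: "0 < c" and p: "p \<in> fst G" and q: "q \<in> fst G"
    and within: "edges_within G"
    and nonneg: "\<And>u. 0 \<le> energy G u"
    and lower: "\<And>u. c * energy G u \<le> energy G' u"
    and extension: "\<And>v. \<forall>x. x \<notin> fst G \<longrightarrow> v x = 0 \<Longrightarrow>
       \<exists>w. (\<forall>x \<in> fst G. w x = v x) \<and> (\<forall>x. x \<notin> fst G' \<longrightarrow> w x = 0) \<and> energy G' w = c * energy G v"
  shows "reff G p q = c * reff G' p q"
proof (cases "p = q")
  case True
  then show ?thesis by (simp add: reff_def)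
next
  case False
  define S where "S = {energy G u | u. (\<forall>x. x \<notin> fst G \<longrightarrow> u x = 0) \<and> u p = 1 \<and> u q = 0}"
  define S' where "S' = {energy G' u | u. (\<forall>x. x \<notin> fst G' \<longrightarrow> u x = 0) \<and> u p = 1 \<and> u q = 0}"
  have "Inf S' = c * Inf S"
  proof (rule Inf_eq_scaled[OF c_pos])
    have "energy G (\<lambda>x. if x = p then 1 else 0) \<in> S" unfolding S_def using p False by auto
    then show "S \<noteq> {}" by auto
    show "0 \<le> e" if "e \<in> S" for e using that nonneg unfolding S_def by blast
    show "\<exists>e \<in> S. c * e \<le> e'" if "e' \<in> S'" for e'
    proof -
      obtain u where u: "e' = energy G' u" "u p = 1" "u q = 0"
        using \<open>e' \<in> S'\<close> unfolding S'_def by blast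
      define v where "v x = (if x \<in> fst G then u x else 0)" for x
      have "energy G v = energy G u" using within by (intro energy_cong) (simp_all add: v_def)
      moreover have "energy G v \<in> S" unfolding S_def using u p q by (auto simp: v_def)
      ultimately show ?thesis using lower[of u] u(1) by auto
    qed
    show "c * e \<in> S'" if "e \<in> S" for e
    proof -
      obtain v where v: "e = energy G v" "\<forall>x. x \<notin> fst G \<longrightarrow> v x = 0" "v p = 1" "v q = 0"
        using \<open>e \<in> S\<close> unfolding S_def by blast
      obtain w where w: "\<forall>x \<in> fst G. w x = v x" "\<forall>x. x \<notin> fst G' \<longrightarrow> w x = 0"
        "energy G' w = c * energy G v"
        using extension[OF v(2)] by blast
      have "w p = 1" "w q = 0" using w(1) v(3,4) p q by auto
      then show ?thesis unfolding S'_def v(1) w(3)[symmetric] using w(2) by blast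
    qed
  qed
  then show ?thesis using False c_pos by (simp add: reff_def S_def[symmetric] S'_def[symmetric])
qed

lemma sqrt41_bounds: "3 < sqrt (41::real)" "sqrt (41::real) < 19"
  by (rule real_less_rsqrt, simp) (rule real_less_lsqrt, simp_all)

lemma conductances:
  "1 / Rone = (sqrt 41 + 1) / 10" "1 / Rtwo = 1"
  "1 / (kconst * Rone) = (19 - sqrt 41) / 10" "1 / (kconst * Rtwo) = (5 * sqrt 41 - 15) / 10"
proof -
  let ?s = "sqrt (41::real)"
  have sq: "?s * ?s = 41" by simp
  have "?s - 1 \<noteq> 0" "3 + ?s \<noteq> 0" using sqrt41_bounds by auto
  moreover have "(?s + 1) * (?s - 1) = 40" "(3 + ?s) * (5 * ?s - 15) = 160"
    using sq by (simp_all add: algebra_simps)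
  ultimately show "1 / Rone = (?s + 1) / 10" "1 / Rtwo = 1" "1 / (kconst * Rtwo) = (5 * ?s - 15) / 10"
    unfolding Rone_def Rtwo_def kconst_def by (simp_all add: field_simps)
  have "(3 + ?s) * (?s - 1) * (19 - ?s) = 17 * (?s * ?s) - (?s * ?s) * ?s + 41 * ?s - 57"
    by (simp add: algebra_simps)
  then have "kconst * Rone * ((19 - ?s) / 10) = 1"
    unfolding kconst_def Rone_def using sq by simp
  then show "1 / (kconst * Rone) = (19 - ?s) / 10"
    using inverse_unique by (metis inverse_eq_divide)
qed

lemma kconst_pos: "0 < kconst"
  unfolding kconst_def using sqrt41_bounds by simp

(* Geometry.  The sides P2 - P1 and P3 - P1 of an equilateral triangle are linearly independent
   over R: a real multiple t of P2 - P1 with |t| = |t - 1| = 1 does not exist. *)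
lemma equilateral_independent:
  assumes "equilateral P1 P2 P3"
    and "complex_of_real y * (P2 - P1) + complex_of_real z * (P3 - P1) = 0"
  shows "y = 0 \<and> z = 0"
proof -
  define d2 d3 where "d2 = P2 - P1" and "d3 = P3 - P1"
  have "d2 \<noteq> 0" and n3: "norm d3 = norm d2" and n32: "norm (d3 - d2) = norm d2"
    using assms(1) unfolding equilateral_def d2_def d3_def dist_norm
    by (auto simp: norm_minus_commute)
  then have pos: "norm d2 > 0" by simp
  have lin: "complex_of_real y * d2 + complex_of_real z * d3 = 0"
    using assms(2) unfolding d2_def d3_def .
  show ?thesis
  proof (cases "z = 0")
    case True
    then show ?thesis using lin \<open>d2 \<noteq> 0\<close> by simp
  next
    case False
    define t where "t = - y / z"
    have d3_eq: "d3 = complex_of_real t * d2"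
      using lin False unfolding t_def by (simp add: field_simps add_eq_0_iff2)
    have "\<bar>t\<bar> * norm d2 = norm d2"
      using n3 unfolding d3_eq by (simp add: norm_mult)
    moreover have "\<bar>t - 1\<bar> * norm d2 = norm d2"
    proof -
      have "d3 - d2 = complex_of_real (t - 1) * d2" unfolding d3_eq by (simp add: algebra_simps)
      then show ?thesis using n32 by (simp only: norm_mult norm_of_real)
    qed
    ultimately have "\<bar>t\<bar> = 1" "\<bar>t - 1\<bar> = 1" using pos by simp_all
    then show ?thesis by linarith
  qed
qed

definition coords :: "complex \<Rightarrow> complex \<Rightarrow> complex \<Rightarrow> real \<Rightarrow> real \<Rightarrow> complex" where
  "coords P1 P2 P3 x y = P1 + complex_of_real x * (P2 - P1) + complex_of_real y * (P3 - P1)"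

lemma coords_inj:
  assumes "\<And>y z. complex_of_real y * (P2 - P1) + complex_of_real z * (P3 - P1) = 0 \<Longrightarrow> y = 0 \<and> z = 0"
  shows "coords P1 P2 P3 x y = coords P1 P2 P3 x' y' \<longleftrightarrow> x = x' \<and> y = y'"
proof
  assume "coords P1 P2 P3 x y = coords P1 P2 P3 x' y'"
  then have "complex_of_real (x - x') * (P2 - P1) + complex_of_real (y - y') * (P3 - P1) = 0"
    unfolding coords_def by (simp add: algebra_simps)
  then show "x = x' \<and> y = y'" using assms by fastforce
qed simp

lemma level2_coords:
  "P1 = coords P1 P2 P3 0 0" "P2 = coords P1 P2 P3 1 0" "P3 = coords P1 P2 P3 0 1"
  "F3 P3 P1 = coords P1 P2 P3 0 (3/2)" "F3 P3 P2 = coords P1 P2 P3 (-1/2) (3/2)"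
  "F1 P1 P2 = coords P1 P2 P3 (1/2) 0" "F1 P1 P3 = coords P1 P2 P3 0 (1/2)"
  "F2 P2 P3 = coords P1 P2 P3 (1/2) (1/2)"
  "F1 P1 (F3 P3 P1) = coords P1 P2 P3 0 (3/4)" "F2 P2 (F3 P3 P2) = coords P1 P2 P3 (1/4) (3/4)"
  "F1 P1 (F3 P3 P2) = coords P1 P2 P3 (-1/4) (3/4)" "F2 P2 (F3 P3 P1) = coords P1 P2 P3 (1/2) (3/4)"
  unfolding coords_def F1_def F2_def F3_def by (simp_all add: field_simps)

(* Hence the twelve points are pairwise distinct (listed so that simp can use the disequalities
   in the orientation "new vertex \<noteq> earlier vertex"). *)
lemma level2_distinct:
  assumes "equilateral P1 P2 P3"
  shows "distinct [F2 P2 (F3 P3 P1), F1 P1 (F3 P3 P2), F2 P2 (F3 P3 P2), F1 P1 (F3 P3 P1),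
     F2 P2 P3, F1 P1 P3, F1 P1 P2, F3 P3 P2, F3 P3 P1, P3, P2, P1]"
proof -
  let ?f = "\<lambda>(x, y). coords P1 P2 P3 x y"
  let ?xs = "[(1/2, 3/4), (-1/4, 3/4), (1/4, 3/4), (0, 3/4), (1/2, 1/2), (0, 1/2), (1/2, 0),
    (-1/2, 3/2), (0, 3/2), (0, 1), (1, 0), (0, 0)] :: (real \<times> real) list"
  have "inj_on ?f (set ?xs)"
    using coords_inj[OF equilateral_independent[OF assms]] by (intro inj_onI) auto
  then have "distinct (map ?f ?xs)" by (simp add: distinct_map)
  then show ?thesis by (simp only: list.map prod.case level2_coords[symmetric])
qed

lemma cell_gluing:
  "F1 P1 P1 = P1 \<and> F2 P2 P2 = P2 \<and> F3 P3 P3 = P3 \<and> F2 P2 P1 = F1 P1 P2 \<and>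
   F3 P3 (F3 P3 P1) = F1 P1 (F3 P3 P1) \<and> F3 P3 (F3 P3 P2) = F2 P2 (F3 P3 P2)"
  unfolding F1_def F2_def F3_def by (simp add: field_simps add.commute)

definition new_vertices :: "complex \<Rightarrow> complex \<Rightarrow> complex \<Rightarrow> complex set" where
  "new_vertices P1 P2 P3 = {F1 P1 P2, F1 P1 P3, F2 P2 P3, F1 P1 (F3 P3 P1), F2 P2 (F3 P3 P2),
     F1 P1 (F3 P3 P2), F2 P2 (F3 P3 P1)}"

lemma vertices_G2: "fst (G2 P1 P2 P3) = V0 P1 P2 P3 \<union> new_vertices P1 P2 P3"
  by (auto simp: G2_def V0_def new_vertices_def cell_gluing[of P1 P2 P3])

(* The energies as explicit quadratic forms in the vertex values: a, b, c, q1, q2 are the values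
   at P1, P2, P3, Q1, Q2, and m12, m13, m23, xa, xb, xc, xd those at the new vertices
   F1 P2, F1 P3, F2 P3, F1 Q1, F2 Q2, F1 Q2, F2 Q1. *)
definition form1 :: "real \<Rightarrow> real \<Rightarrow> real \<Rightarrow> real \<Rightarrow> real \<Rightarrow> real \<Rightarrow> real \<Rightarrow> real \<Rightarrow> real \<Rightarrow> real" where
  "form1 c1 c2 c3 c4 a b c q1 q2 =
     c1 * (a - b)\<^sup>2 + c2 * (a - c)\<^sup>2 + c2 * (b - c)\<^sup>2
   + c3 * (q1 - q2)\<^sup>2 + c4 * (q1 - c)\<^sup>2 + c4 * (q2 - c)\<^sup>2"

definition form2 :: "real \<Rightarrow> real \<Rightarrow> real \<Rightarrow> real \<Rightarrow> real \<Rightarrow> real \<Rightarrow> real \<Rightarrow> real \<Rightarrow> real \<Rightarrow>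
    real \<Rightarrow> real \<Rightarrow> real \<Rightarrow> real \<Rightarrow> real \<Rightarrow> real \<Rightarrow> real \<Rightarrow> real" where
  "form2 c1 c2 c3 c4 a b c q1 q2 m12 m13 m23 xa xb xc xd =
     c1 * (a - m12)\<^sup>2 + c2 * (a - m13)\<^sup>2 + c2 * (m12 - m13)\<^sup>2
   + c3 * (xa - xc)\<^sup>2 + c4 * (xa - m13)\<^sup>2 + c4 * (xc - m13)\<^sup>2
   + c1 * (m12 - b)\<^sup>2 + c2 * (m12 - m23)\<^sup>2 + c2 * (b - m23)\<^sup>2
   + c3 * (xd - xb)\<^sup>2 + c4 * (xd - m23)\<^sup>2 + c4 * (xb - m23)\<^sup>2
   + c1 * (q1 - q2)\<^sup>2 + c2 * (q1 - c)\<^sup>2 + c2 * (q2 - c)\<^sup>2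
   + c3 * (xa - xb)\<^sup>2 + c4 * (xa - c)\<^sup>2 + c4 * (xb - c)\<^sup>2"

(* 1280 times the harmonic extension of boundary data (a, b, c) at P1, P2, P3 to the new vertices
   (with s = sqrt 41): at F1 P2, at F1 P3 (at F2 P3 by symmetry), at F1 Q1 (F2 Q2), at F1 Q2 (F2 Q1).
   The values at Q1, Q2 do not enter: they are not connected to the new vertices. *)
definition hm12 :: "real \<Rightarrow> real \<Rightarrow> real \<Rightarrow> real \<Rightarrow> real" where
  "hm12 s a b c = (120 * s - 280) * (a + b) + (1840 - 240 * s) * c"
definition hm13 :: "real \<Rightarrow> real \<Rightarrow> real \<Rightarrow> real \<Rightarrow> real" where
  "hm13 s a b c = (352 + 32 * s) * a + (48 * s - 112) * b + (1040 - 80 * s) * c"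
definition hxa :: "real \<Rightarrow> real \<Rightarrow> real \<Rightarrow> real \<Rightarrow> real" where
  "hxa s a b c = (255 + 5 * s) * a + (25 * s - 5) * b + (1030 - 30 * s) * c"
definition hxc :: "real \<Rightarrow> real \<Rightarrow> real \<Rightarrow> real \<Rightarrow> real" where
  "hxc s a b c = (250 + 30 * s) * a + (70 * s - 270) * b + (1300 - 100 * s) * c"

(* Completing the square, scaled to integer coefficients: an exact polynomial identity in s
   whose defect is an explicit multiple of s^2 - 41. *)
lemma form2_split_certificate:
  "16 * 1280\<^sup>2 * form2 (s + 1) 10 (19 - s) (5 * s - 15) a b c q1 q2 m12 m13 m23 xa xb xc xd =
     1280\<^sup>2 * (3 + s) * form1 (s + 1) 10 (19 - s) (5 * s - 15) a b c q1 q2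
   + 16 * form2 (s + 1) 10 (19 - s) (5 * s - 15) 0 0 0 0 0
       (1280 * m12 - hm12 s a b c) (1280 * m13 - hm13 s a b c) (1280 * m23 - hm13 s b a c)
       (1280 * xa - hxa s a b c) (1280 * xb - hxa s b a c)
       (1280 * xc - hxc s a b c) (1280 * xd - hxc s b a c)
   + (s * s - 41) *
     ((- 6553600 * q2 * q2 - 3276800 * q1 * q2 - 6553600 * q1 * q1 - 1228800 * c * xd
       - 1228800 * c * xc + 1228800 * c * xb + 1228800 * c * xa - 6144000 * c * m23
       - 6144000 * c * m13 - 19660800 * c * m12 + 16384000 * c * q2 + 16384000 * c * q1
       + 9142400 * c * c - 1433600 * b * xd + 2662400 * b * xc - 2662400 * b * xb
       + 1433600 * b * xa + 5939200 * b * m23 + 204800 * b * m13 + 9830400 * b * m12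
       - 9552000 * b * c - 3139680 * b * b + 2662400 * a * xd - 1433600 * a * xc
       + 1433600 * a * xb - 2662400 * a * xa + 204800 * a * m23 + 5939200 * a * m13
       + 9830400 * a * m12 - 9552000 * a * c - 143040 * a * b - 3139680 * a * a)
    + (- 2294400 * c * c + 2294400 * b * c - 603680 * b * b + 2294400 * a * c
       - 1087040 * a * b - 603680 * a * a) * s)"
  unfolding form1_def form2_def hm12_def hm13_def hxa_def hxc_def
  by (simp only: power2_eq_square) algebra

lemma form_homogeneity:
  "form1 (r * c1) (r * c2) (r * c3) (r * c4) a b c q1 q2 = r * form1 c1 c2 c3 c4 a b c q1 q2"
  "form2 (r * c1) (r * c2) (r * c3) (r * c4) a b c q1 q2 m12 m13 m23 xa xb xc xd =
     r * form2 c1 c2 c3 c4 a b c q1 q2 m12 m13 m23 xa xb xc xd"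
  "form2 c1 c2 c3 c4 0 0 0 0 0 (r * m12) (r * m13) (r * m23) (r * xa) (r * xb) (r * xc) (r * xd) =
     r\<^sup>2 * form2 c1 c2 c3 c4 0 0 0 0 0 m12 m13 m23 xa xb xc xd"
  unfolding form1_def form2_def by (simp_all only: power2_eq_square) algebra+

lemma form2_split:
  fixes s :: real
  assumes "s * s = 41"
  defines "C \<equiv> form2 ((s + 1) / 10) 1 ((19 - s) / 10) ((5 * s - 15) / 10)"
  shows "C a b c q1 q2 m12 m13 m23 xa xb xc xd =
      (3 + s) / 16 * form1 ((s + 1) / 10) 1 ((19 - s) / 10) ((5 * s - 15) / 10) a b c q1 q2
    + C 0 0 0 0 0 (m12 - hm12 s a b c / 1280) (m13 - hm13 s a b c / 1280) (m23 - hm13 s b a c / 1280)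
        (xa - hxa s a b c / 1280) (xb - hxa s b a c / 1280)
        (xc - hxc s a b c / 1280) (xd - hxc s b a c / 1280)"
proof -
  have scaled: "form2 ((s + 1) / 10) 1 ((19 - s) / 10) ((5 * s - 15) / 10) =
      form2 (1/10 * (s + 1)) (1/10 * 10) (1/10 * (19 - s)) (1/10 * (5 * s - 15))"
    "form1 ((s + 1) / 10) 1 ((19 - s) / 10) ((5 * s - 15) / 10) =
      form1 (1/10 * (s + 1)) (1/10 * 10) (1/10 * (19 - s)) (1/10 * (5 * s - 15))"
    by simp_all
  have shift: "m - h / 1280 = 1/1280 * (1280 * m - h)" for m h :: real by simp
  show ?thesis
    unfolding C_def scaled shift form_homogeneity
    using form2_split_certificate[of s a b c q1 q2 m12 m13 m23 xa xb xc xd] assms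
    by (simp add: field_simps)
qed

lemma form2_nonneg:
  "0 \<le> c1 \<Longrightarrow> 0 \<le> c2 \<Longrightarrow> 0 \<le> c3 \<Longrightarrow> 0 \<le> c4 \<Longrightarrow>
   0 \<le> form2 c1 c2 c3 c4 a b c q1 q2 m12 m13 m23 xa xb xc xd"
  unfolding form2_def by (intro add_nonneg_nonneg mult_nonneg_nonneg) simp_all

lemma energy_G1:
  "energy (G1 P1 P2 P3) u = form1 (1 / Rone) (1 / Rtwo) (1 / (kconst * Rone)) (1 / (kconst * Rtwo))
     (u P1) (u P2) (u P3) (u (F3 P3 P1)) (u (F3 P3 P2))"
  by (simp add: energy_def G1_def edges1_def form1_def add.assoc Let_def)

lemma energy_G2:
  "energy (G2 P1 P2 P3) u = form2 (1 / Rone) (1 / Rtwo) (1 / (kconst * Rone)) (1 / (kconst * Rtwo))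
     (u P1) (u P2) (u P3) (u (F3 P3 P1)) (u (F3 P3 P2))
     (u (F1 P1 P2)) (u (F1 P1 P3)) (u (F2 P2 P3)) (u (F1 P1 (F3 P3 P1))) (u (F2 P2 (F3 P3 P2)))
     (u (F1 P1 (F3 P3 P2))) (u (F2 P2 (F3 P3 P1)))"
  by (simp add: energy_def G2_def edges1_def form2_def add.assoc Let_def cell_gluing[of P1 P2 P3])

lemma energy_G2_decomposition:
  "energy (G2 P1 P2 P3) u = kconst * energy (G1 P1 P2 P3) u
   + form2 ((sqrt 41 + 1) / 10) 1 ((19 - sqrt 41) / 10) ((5 * sqrt 41 - 15) / 10) 0 0 0 0 0
       (u (F1 P1 P2) - hm12 (sqrt 41) (u P1) (u P2) (u P3) / 1280)
       (u (F1 P1 P3) - hm13 (sqrt 41) (u P1) (u P2) (u P3) / 1280)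
       (u (F2 P2 P3) - hm13 (sqrt 41) (u P2) (u P1) (u P3) / 1280)
       (u (F1 P1 (F3 P3 P1)) - hxa (sqrt 41) (u P1) (u P2) (u P3) / 1280)
       (u (F2 P2 (F3 P3 P2)) - hxa (sqrt 41) (u P2) (u P1) (u P3) / 1280)
       (u (F1 P1 (F3 P3 P2)) - hxc (sqrt 41) (u P1) (u P2) (u P3) / 1280)
       (u (F2 P2 (F3 P3 P1)) - hxc (sqrt 41) (u P2) (u P1) (u P3) / 1280)"
  unfolding energy_G1 energy_G2 conductances unfolding kconst_def by (rule form2_split) simp

lemma energy_G1_nonneg: "0 \<le> energy (G1 P1 P2 P3) u"
proof (rule energy_nonneg)
  have "0 < Rone" unfolding Rone_def using sqrt41_bounds by simp
  then show "\<forall>(p, q, r) \<in> set (snd (G1 P1 P2 P3)). 0 \<le> r"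
    using kconst_pos by (simp add: G1_def edges1_def Let_def Rtwo_def)
qed

lemma energy_G2_lower: "kconst * energy (G1 P1 P2 P3) u \<le> energy (G2 P1 P2 P3) u"
  unfolding energy_G2_decomposition using sqrt41_bounds by (simp add: form2_nonneg)

lemma edges_within_G1: "edges_within (G1 P1 P2 P3)"
  by (simp add: edges_within_def G1_def edges1_def V0_def Let_def)

definition harmonic_ext :: "complex \<Rightarrow> complex \<Rightarrow> complex \<Rightarrow> (complex \<Rightarrow> real) \<Rightarrow> complex \<Rightarrow> real" where
  "harmonic_ext P1 P2 P3 v x = (let a = v P1; b = v P2; c = v P3; s = sqrt 41 in
     if x \<in> V0 P1 P2 P3 then v x
     else if x = F1 P1 P2 then hm12 s a b c / 1280
     else if x = F1 P1 P3 then hm13 s a b c / 1280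
     else if x = F2 P2 P3 then hm13 s b a c / 1280
     else if x = F1 P1 (F3 P3 P1) then hxa s a b c / 1280
     else if x = F2 P2 (F3 P3 P2) then hxa s b a c / 1280
     else if x = F1 P1 (F3 P3 P2) then hxc s a b c / 1280
     else if x = F2 P2 (F3 P3 P1) then hxc s b a c / 1280
     else v x)"

lemma harmonic_ext_values:
  assumes "equilateral P1 P2 P3"
  shows "\<forall>x \<in> V0 P1 P2 P3. harmonic_ext P1 P2 P3 v x = v x"
    and "harmonic_ext P1 P2 P3 v (F1 P1 P2) = hm12 (sqrt 41) (v P1) (v P2) (v P3) / 1280"
    and "harmonic_ext P1 P2 P3 v (F1 P1 P3) = hm13 (sqrt 41) (v P1) (v P2) (v P3) / 1280"
    and "harmonic_ext P1 P2 P3 v (F2 P2 P3) = hm13 (sqrt 41) (v P2) (v P1) (v P3) / 1280"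
    and "harmonic_ext P1 P2 P3 v (F1 P1 (F3 P3 P1)) = hxa (sqrt 41) (v P1) (v P2) (v P3) / 1280"
    and "harmonic_ext P1 P2 P3 v (F2 P2 (F3 P3 P2)) = hxa (sqrt 41) (v P2) (v P1) (v P3) / 1280"
    and "harmonic_ext P1 P2 P3 v (F1 P1 (F3 P3 P2)) = hxc (sqrt 41) (v P1) (v P2) (v P3) / 1280"
    and "harmonic_ext P1 P2 P3 v (F2 P2 (F3 P3 P1)) = hxc (sqrt 41) (v P2) (v P1) (v P3) / 1280"
  by (insert level2_distinct[OF assms]) (simp_all add: harmonic_ext_def V0_def Let_def)

(* On the harmonic extension the deviation form vanishes, so the energy is exactly k E_G1. *)
lemma harmonic_ext_energy:
  assumes "equilateral P1 P2 P3"
  shows "energy (G2 P1 P2 P3) (harmonic_ext P1 P2 P3 v) = kconst * energy (G1 P1 P2 P3) v"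
proof -
  have zero: "form2 c1 c2 c3 c4 0 0 0 0 0 0 0 0 0 0 0 0 = 0" for c1 c2 c3 c4
    unfolding form2_def by simp
  have boundary: "harmonic_ext P1 P2 P3 v P1 = v P1" "harmonic_ext P1 P2 P3 v P2 = v P2"
    "harmonic_ext P1 P2 P3 v P3 = v P3"
    using harmonic_ext_values(1)[OF assms] by (simp_all add: V0_def)
  have "energy (G1 P1 P2 P3) (harmonic_ext P1 P2 P3 v) = energy (G1 P1 P2 P3) v"
    using edges_within_G1 harmonic_ext_values(1)[OF assms] by (intro energy_cong) (simp_all add: G1_def)
  then show ?thesis
    unfolding energy_G2_decomposition harmonic_ext_values(2-8)[OF assms] boundary
    by (simp only: diff_self zero add_0_right)
qed

lemma harmonic_ext_support:
  assumes "\<forall>x. x \<notin> V0 P1 P2 P3 \<longrightarrow> v x = 0" and "x \<notin> fst (G2 P1 P2 P3)"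
  shows "harmonic_ext P1 P2 P3 v x = 0"
  using assms unfolding vertices_G2 new_vertices_def harmonic_ext_def Let_def by auto

theorem mainTheorem1:
  fixes P1 P2 P3 p q :: complex
  assumes "equilateral P1 P2 P3"
    and "p \<in> V0 P1 P2 P3" and "q \<in> V0 P1 P2 P3"
  shows "reff (G1 P1 P2 P3) p q = kconst * reff (G2 P1 P2 P3) p q"
proof (rule reff_eq_scaled_trace)
  have vertices_G1: "fst (G1 P1 P2 P3) = V0 P1 P2 P3" by (simp add: G1_def)
  show "0 < kconst" by (rule kconst_pos)
  show "p \<in> fst (G1 P1 P2 P3)" "q \<in> fst (G1 P1 P2 P3)" using assms(2,3) vertices_G1 by simp_all
  show "edges_within (G1 P1 P2 P3)" by (rule edges_within_G1)
  show "0 \<le> energy (G1 P1 P2 P3) u" for u by (rule energy_G1_nonneg)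
  show "kconst * energy (G1 P1 P2 P3) u \<le> energy (G2 P1 P2 P3) u" for u by (rule energy_G2_lower)
  fix v :: "complex \<Rightarrow> real" assume "\<forall>x. x \<notin> fst (G1 P1 P2 P3) \<longrightarrow> v x = 0"
  then show "\<exists>w. (\<forall>x \<in> fst (G1 P1 P2 P3). w x = v x) \<and> (\<forall>x. x \<notin> fst (G2 P1 P2 P3) \<longrightarrow> w x = 0)
      \<and> energy (G2 P1 P2 P3) w = kconst * energy (G1 P1 P2 P3) v"
    using harmonic_ext_values(1)[OF assms(1)] harmonic_ext_support harmonic_ext_energy[OF assms(1)]
    unfolding vertices_G1 by blast
qed

end
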